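(* Under the isomorphism $\iota$ of Lemma 3.1, the image of $\mathcal C^+(\mathrm{II}_{2,10})$ is $M_4(\mathcal C^+(-\mathbb O(\mathbb Z)))$.
   Context: Clifford algebras: for a real quadratic space $(W,q)$, $(a,b)=q(a+b)-q(a)-q(b)$, $\mathcal C(W)$ is generated by $W$ with $ab+ba=(a,b)$, $\mathcal C^+(W)$ its even part; for a lattice $L\subset W$, $\mathcal C^+(L)$ is the subring generated by all products $ab$, $a,b\in L$. $V=\mathbb R^{12}$ with basis $h_1,\dots,h_4,e_0,\dots,e_7$, $(h_1,h_2)=(h_3,h_4)=1$, other pairings among the $h_i$ zero, $(h_i,e_k)=0$, $(e_k,e_l)=-2\delta_{kl}$, $q(x)=(x,x)/2$. $V_0=\sum\mathbb Re_k$ is identified with the octaves $\mathbb O=\mathbb R^8$ (standard basis $e_0,\dots,e_7$) with quadratic form $-N$, $N(x)=\sum x_k^2$. Integral octaves $\mathbb O(\mathbb Z)=\sum\mathbb Zf_i$ with $f_0=e_0,f_1=e_1,f_2=e_2,f_3=e_3$, $f_4=\frac12(e_1+e_2+e_3-e_4)$, $f_5=\frac12(-e_0-e_1-e_4+e_5)$, $f_6=\frac12(-e_0+e_1-e_2+e_6)$, $f_7=\frac12(-e_0+e_2+e_4+e_7)$; $-\mathbb O(\mathbb Z)$ denotes this lattice in $V_0$. $\mathrm{II}_{2,10}=\mathbb Zh_1+\mathbb Zh_2+\mathbb Zh_3+\mathbb Zh_4+\mathbb O(\mathbb Z)\subset V$. $\iota:\mathcal C(V)\to M_4(\mathcal C(V_0))$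 is the algebra isomorphism with $\iota(h_1)=e_0(E_{12}+E_{43})$, $\iota(h_2)=e_0(-E_{21}-E_{34})$, $\iota(h_3)=e_0(E_{14}-E_{23})$, $\iota(h_4)=e_0(E_{32}-E_{41})$, $\iota(e_0)=e_0\mathrm{diag}(-1,1,-1,1)$, $\iota(e_i)=e_iE_4$ ($1\le i\le7$), $E_{kl}$ the matrix units. *)

theory Defs
  imports Complex_Main
begin

text \<open>Since the basis e_0..e_7 is orthogonal with (e_k,e_k) = -2, i.e. e_k^2 = q(e_k) = -1,
 C(V_0) has the standard basis e_S (S a subset of {0..7}, e_S = ordered product of the e_k, k in S).
 An element is represented by its coefficient function on subsets of {0,...,7}
 (values on other sets are irrelevant and kept 0 by the operations).\<close>

type_synonym cl = "nat set \<Rightarrow> real"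

definition idx8 :: "nat set" where "idx8 = {..<8}"

text \<open>e_S e_T = (-1)^(#{(s,t) in S x T. t < s} + |S \<inter> T|) e_{S \<triangle> T}\<close>
definition csign :: "nat set \<Rightarrow> nat set \<Rightarrow> real" where
  "csign S T = (-1) ^ (card {(s,t). s \<in> S \<and> t \<in> T \<and> t < s} + card (S \<inter> T))"

definition cmul :: "cl \<Rightarrow> cl \<Rightarrow> cl" where
  "cmul x y = (\<lambda>U. \<Sum>S\<in>Pow idx8. \<Sum>T\<in>Pow idx8.
      if (S - T) \<union> (T - S) = U then csign S T * x S * y T else 0)"

definition cadd :: "cl \<Rightarrow> cl \<Rightarrow> cl" where "cadd x y = (\<lambda>S. x S + y S)"
definition cneg :: "cl \<Rightarrow> cl" where "cneg x = (\<lambda>S. - x S)"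
definition czero :: cl where "czero = (\<lambda>S. 0)"
definition cone :: cl where "cone = (\<lambda>S. if S = {} then 1 else 0)"
definition cscale :: "real \<Rightarrow> cl \<Rightarrow> cl" where "cscale c x = (\<lambda>S. c * x S)"

text \<open>Embedding of V_0 into C(V_0): y (coordinates w.r.t. e_0..e_7) maps to sum y_k e_k.\<close>
definition cvec :: "(nat \<Rightarrow> real) \<Rightarrow> cl" where
  "cvec y = (\<lambda>S. if S \<subseteq> idx8 \<and> card S = 1 then y (the_elem S) else 0)"

definition ce0 :: cl where "ce0 = cvec (\<lambda>k. if k = 0 then 1 else 0)"

inductive_set ring_gen :: "('a \<Rightarrow> 'a \<Rightarrow> 'a) \<Rightarrow> ('a \<Rightarrow> 'a \<Rightarrow> 'a) \<Rightarrow> ('a \<Rightarrow> 'a)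
    \<Rightarrow> 'a \<Rightarrow> 'a set \<Rightarrow> 'a set"
  for mul add neg one G where
  gen: "x \<in> G \<Longrightarrow> x \<in> ring_gen mul add neg one G"
| one: "one \<in> ring_gen mul add neg one G"
| add: "x \<in> ring_gen mul add neg one G \<Longrightarrow> y \<in> ring_gen mul add neg one G
          \<Longrightarrow> add x y \<in> ring_gen mul add neg one G"
| neg: "x \<in> ring_gen mul add neg one G \<Longrightarrow> neg x \<in> ring_gen mul add neg one G"
| mul: "x \<in> ring_gen mul add neg one G \<Longrightarrow> y \<in> ring_gen mul add neg one G
          \<Longrightarrow> mul x y \<in> ring_gen mul add neg one G"

text \<open>Basis f_0..f_7 of O(Z), as coordinate vectors w.r.t. e_0..e_7.\<close>
definition octf :: "nat \<Rightarrow> nat \<Rightarrow> real" where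
  "octf i = (if i = 0 then (\<lambda>k. if k = 0 then 1 else 0)
     else if i = 1 then (\<lambda>k. if k = 1 then 1 else 0)
     else if i = 2 then (\<lambda>k. if k = 2 then 1 else 0)
     else if i = 3 then (\<lambda>k. if k = 3 then 1 else 0)
     else if i = 4 then (\<lambda>k. if k \<in> {1,2,3} then 1/2 else if k = 4 then -1/2 else 0)
     else if i = 5 then (\<lambda>k. if k \<in> {0,1,4} then -1/2 else if k = 5 then 1/2 else 0)
     else if i = 6 then (\<lambda>k. if k \<in> {0,2} then -1/2 else if k \<in> {1,6} then 1/2 else 0)
     else if i = 7 then (\<lambda>k. if k = 0 then -1/2 else if k \<in> {2,4,7} then 1/2 else 0)
     else (\<lambda>k. 0))"

text \<open>-O(Z) in V_0 (coordinates on indices \<ge> 8 are normalised to 0).\<close>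
definition octZ :: "(nat \<Rightarrow> real) set" where
  "octZ = {y. \<exists>n :: nat \<Rightarrow> int. y = (\<lambda>k. \<Sum>i<8. of_int (n i) * octf i k)}"

definition Cplus_octZ :: "cl set" where
  "Cplus_octZ = ring_gen cmul cadd cneg cone {cmul (cvec a) (cvec b) | a b. a \<in> octZ \<and> b \<in> octZ}"

type_synonym mat = "nat \<Rightarrow> nat \<Rightarrow> cl"

definition idx4 :: "nat set" where "idx4 = {1..4}"

definition mmul :: "mat \<Rightarrow> mat \<Rightarrow> mat" where
  "mmul A B = (\<lambda>i j. if i \<in> idx4 \<and> j \<in> idx4
     then foldr cadd (map (\<lambda>k. cmul (A i k) (B k j)) [1,2,3,4]) czero else czero)"
definition madd :: "mat \<Rightarrow> mat \<Rightarrow> mat" where "madd A B = (\<lambda>i j. cadd (A i j) (B i j))"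
definition mneg :: "mat \<Rightarrow> mat" where "mneg A = (\<lambda>i j. cneg (A i j))"
definition mone :: mat where
  "mone = (\<lambda>i j. if i \<in> idx4 \<and> i = j then cone else czero)"

definition M4 :: "cl set \<Rightarrow> mat set" where
  "M4 S = {A. \<forall>i j. if i \<in> idx4 \<and> j \<in> idx4 then A i j \<in> S else A i j = czero}"

text \<open>Coefficient (of e_0) in entry (r,c) of iota(h_i):
  iota(h1) = e0(E12+E43), iota(h2) = e0(-E21-E34), iota(h3) = e0(E14-E23), iota(h4) = e0(E32-E41).\<close>
definition hcoef :: "nat \<Rightarrow> nat \<Rightarrow> nat \<Rightarrow> real" where
  "hcoef i r c =
    (if i = 1 then (if (r,c) = (1,2) \<or> (r,c) = (4,3) then 1 else 0)
     else if i = 2 then (if (r,c) = (2,1) \<or> (r,c) = (3,4) then -1 else 0)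
     else if i = 3 then (if (r,c) = (1,4) then 1 else if (r,c) = (2,3) then -1 else 0)
     else if i = 4 then (if (r,c) = (3,2) then 1 else if (r,c) = (4,1) then -1 else 0)
     else 0)"

text \<open>iota(e0) = e0 diag(-1,1,-1,1).\<close>
definition dcoef :: "nat \<Rightarrow> nat \<Rightarrow> real" where
  "dcoef r c = (if r = c then (if odd r then -1 else 1) else 0)"

text \<open>iota on a vector x_1 h_1 + ... + x_4 h_4 + sum_k y_k e_k of V, with
  iota(e_i) = e_i E_4 (E_4 the identity matrix) for 1 \<le> i \<le> 7; extended linearly.\<close>
definition iotaV :: "(nat \<Rightarrow> real) \<Rightarrow> (nat \<Rightarrow> real) \<Rightarrow> mat" where
  "iotaV x y = (\<lambda>r c. if r \<in> idx4 \<and> c \<in> idx4 then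
      cadd (cscale ((\<Sum>i\<in>idx4. x i * hcoef i r c) + y 0 * dcoef r c) ce0)
           (if r = c then cvec (y(0 := 0)) else czero)
    else czero)"

text \<open>II_{2,10} = Z h1 + ... + Z h4 + O(Z), as pairs (h-coordinates, octave coordinates).\<close>
definition II210 :: "((nat \<Rightarrow> real) \<times> (nat \<Rightarrow> real)) set" where
  "II210 = {(\<lambda>i. of_int (n i), y) | n y. y \<in> octZ}"

text \<open>iota(C^+(II_{2,10})): since iota is a ring isomorphism, it is the subring of M_4(C(V_0))
  generated by the products iota(a) iota(b), a, b in II_{2,10}.\<close>
definition iota_Cplus_II :: "mat set" where
  "iota_Cplus_II = ring_gen mmul madd mneg mone
     {mmul (iotaV (fst a) (snd a)) (iotaV (fst b) (snd b)) | a b. a \<in> II210 \<and> b \<in> II210}"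

end

theory Submission
  imports Defs
begin

(* Write RM for the subring of M_4(C(V_0)) generated by the products iota(a) iota(b),
   a, b in II_{2,10}, and RS = C^+(-O(Z)).  Both inclusions use only the minimality of a
   generated subring (ring_gen_subset).

   (1) RM \<subseteq> M_4(RS).  M_4(S) is a subring whenever S is closed under the ring operations,
       so it suffices that each generator lies in M_4(RS).  Every entry of iota(v),
       v in II_{2,10}, is a lattice vector w in -O(Z): off the diagonal it is an integer
       multiple of e_0, on the diagonal it is y or y - 2 y_0 e_0, and 2 y_0 is an integer
       for an integral octave y.  Hence the entries of iota(a) iota(b) are sums of products
       of two lattice vectors.
   (2) M_4(RS) \<subseteq> RM.  The matrix units E_ij lie in RM: E_11 = iota(h_1 h_2 h_3 h_4), and
       the remaining units of the first row and column arise from E_11 and the images of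
       e_0 h_a and h_a h_b, which are real scalar matrices.  For a, b in -O(Z) one has
       E_i2 iota(a) iota(b) E_2j = ab E_ij.  So the set of c with c E_ij in RM for all i, j
       is a subring containing the generators of RS, hence all of RS; finally every matrix
       over RS is the sum of its entries times matrix units. *)

lemma ring_gen_subset:
  assumes "G \<subseteq> S" "one \<in> S"
    and "\<And>x y. x \<in> S \<Longrightarrow> y \<in> S \<Longrightarrow> add x y \<in> S"
    and "\<And>x. x \<in> S \<Longrightarrow> neg x \<in> S"
    and "\<And>x y. x \<in> S \<Longrightarrow> y \<in> S \<Longrightarrow> mul x y \<in> S"
  shows "ring_gen mul add neg one G \<subseteq> S"
proof
  fix x assume "x \<in> ring_gen mul add neg one G"
  then show "x \<in> S" by induction (use assms in auto)
qed

lemma ring_gen_zero: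
  assumes "add one (neg one) = zero"
  shows "zero \<in> ring_gen mul add neg one G"
  using ring_gen.add[OF ring_gen.one ring_gen.neg[OF ring_gen.one]] assms by metis

lemma finite_idx8 [simp]: "finite idx8" by (simp add: idx8_def)

lemma cmul_czero_l [simp]: "cmul czero y = czero"
  by (simp add: cmul_def czero_def fun_eq_iff cong: if_cong)
lemma cmul_czero_r [simp]: "cmul y czero = czero"
  by (simp add: cmul_def czero_def fun_eq_iff cong: if_cong)
lemma cadd_czero_l [simp]: "cadd czero y = y" by (simp add: cadd_def czero_def)
lemma cadd_czero_r [simp]: "cadd y czero = y" by (simp add: cadd_def czero_def)
lemma cneg_czero [simp]: "cneg czero = czero" by (simp add: cneg_def czero_def)
lemma cadd_cneg: "cadd x (cneg x) = czero" by (simp add: cadd_def cneg_def czero_def)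

text \<open>Genuine elements of C(V_0) have coefficients only on subsets of {0..7}; all products are
  of this kind, and on them cone is a two-sided unit.\<close>
definition cl_supported :: "cl \<Rightarrow> bool" where
  "cl_supported z \<longleftrightarrow> (\<forall>U. \<not> U \<subseteq> idx8 \<longrightarrow> z U = 0)"

lemma cl_supported_cmul: "cl_supported (cmul x y)"
  unfolding cl_supported_def cmul_def by (auto intro!: sum.neutral)

lemma cmul_cone_left:
  assumes "cl_supported z" shows "cmul cone z = z"
proof
  fix U
  have "cmul cone z U = (\<Sum>S\<in>Pow idx8. if S = {} then (\<Sum>T\<in>Pow idx8. if T = U then z T else 0) else 0)"
    unfolding cmul_def cone_def
    by (intro sum.cong refl, rename_tac S, case_tac "S = {}")
       (simp_all cong: if_cong add: csign_def sum.neutral)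
  also have "\<dots> = z U" using assms by (auto simp: cl_supported_def sum.delta' idx8_def)
  finally show "cmul cone z U = z U" .
qed

lemma cmul_cone_right:
  assumes "cl_supported z" shows "cmul z cone = z"
proof
  fix U
  have "cmul z cone U = (\<Sum>S\<in>Pow idx8. \<Sum>T\<in>Pow idx8. if T = {} then (if S = U then z S else 0) else 0)"
    unfolding cmul_def cone_def by (intro sum.cong refl) (auto simp: csign_def)
  also have "\<dots> = z U" using assms by (auto simp: cl_supported_def sum.delta' idx8_def)
  finally show "cmul z cone U = z U" .
qed

definition blade :: "nat set \<Rightarrow> real \<Rightarrow> cl" where
  "blade S0 a = (\<lambda>S. if S = S0 then a else 0)"

lemma cmul_blade:
  assumes "S0 \<subseteq> idx8" "T0 \<subseteq> idx8"
  shows "cmul (blade S0 a) (blade T0 b) = blade ((S0 - T0) \<union> (T0 - S0)) (csign S0 T0 * a * b)"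
proof
  fix U
  define v where "v = (if (S0 - T0) \<union> (T0 - S0) = U then csign S0 T0 * a * b else 0)"
  have blade_term: "(if S - T \<union> (T - S) = U then csign S T * blade S0 a S * blade T0 b T else 0)
      = (if T = T0 then (if S = S0 then v else 0) else 0)" for S T
    unfolding v_def blade_def by auto
  have "cmul (blade S0 a) (blade T0 b) U = (\<Sum>S\<in>Pow idx8. if S = S0 then v else 0)"
    unfolding cmul_def blade_term using assms(2) by (simp add: sum.delta)
  also have "\<dots> = blade ((S0 - T0) \<union> (T0 - S0)) (csign S0 T0 * a * b) U"
    using assms(1) unfolding v_def blade_def by (simp add: sum.delta)
  finally show "cmul (blade S0 a) (blade T0 b) U = blade ((S0 - T0) \<union> (T0 - S0)) (csign S0 T0 * a * b) U" .
qed

definition cs :: "real \<Rightarrow> cl" where "cs a = cscale a cone"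
definition es :: "real \<Rightarrow> cl" where "es a = cscale a ce0"

lemma cs_blade: "cs a = blade {} a"
  by (simp add: cs_def cscale_def cone_def blade_def fun_eq_iff)

lemma es_blade: "es a = blade {0} a"
  by (auto simp: es_def cscale_def ce0_def cvec_def blade_def idx8_def card_Suc_eq fun_eq_iff)

lemma cmul_es: "cmul (es a) (es b) = cs (- (a * b))"
proof -
  have no_inversions: "{(s, t). s \<in> {0::nat} \<and> t \<in> {0} \<and> t < s} = {}" by auto
  have "csign {0} {0} = -1" unfolding csign_def by (subst no_inversions) simp
  then show ?thesis by (simp add: es_blade cs_blade cmul_blade idx8_def)
qed

lemma cmul_cs: "cmul (cs a) (cs b) = cs (a * b)"
  by (simp add: cs_blade cmul_blade csign_def)

lemma cadd_cs: "cadd (cs a) (cs b) = cs (a + b)"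
  by (simp add: cs_def cscale_def cadd_def fun_eq_iff algebra_simps)

lemma cs_1: "cs 1 = cone" by (simp add: cs_def cscale_def fun_eq_iff)
lemma cs_0: "cs 0 = czero" by (simp add: cs_def cscale_def czero_def fun_eq_iff)

lemma cmul_cone_cone: "cmul cone cone = cone"
  using cmul_cs[of 1 1] by (simp add: cs_1)

lemma idx4_eq: "idx4 = {1, 2, 3, 4}" by (auto simp: idx4_def)

lemma foldr4: "foldr cadd (map g [1, 2, 3, 4]) czero = cadd (g 1) (cadd (g 2) (cadd (g 3) (g 4)))"
  by simp

lemma mmul_out: "\<not> (i \<in> idx4 \<and> j \<in> idx4) \<Longrightarrow> mmul A B i j = czero"
  unfolding mmul_def by auto

definition single :: "nat \<Rightarrow> nat \<Rightarrow> cl \<Rightarrow> mat" where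
  "single i j c = (\<lambda>r s. if r = i \<and> s = j then c else czero)"

lemma mmul_single_left:
  assumes "i \<in> idx4" "k \<in> idx4"
  shows "mmul (single i k c) M = (\<lambda>r s. if r = i \<and> s \<in> idx4 then cmul c (M k s) else czero)"
  using assms unfolding mmul_def single_def foldr4 by (auto simp: fun_eq_iff idx4_eq)

lemma mmul_single_right:
  assumes "j \<in> idx4" "k \<in> idx4"
  shows "mmul M (single k j c) = (\<lambda>r s. if r \<in> idx4 \<and> s = j then cmul (M r k) c else czero)"
  using assms unfolding mmul_def single_def foldr4 by (auto simp: fun_eq_iff idx4_eq)

lemma single_mul:
  assumes "i \<in> idx4" "k \<in> idx4" "j \<in> idx4"
  shows "mmul (single i k c) (single k j d) = single i j (cmul c d)"
  using assms by (simp add: mmul_single_left) (auto simp: fun_eq_iff single_def)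

definition smat :: "(nat \<Rightarrow> nat \<Rightarrow> real) \<Rightarrow> mat" where
  "smat f = (\<lambda>r c. if r \<in> idx4 \<and> c \<in> idx4 then cs (f r c) else czero)"
definition emat :: "(nat \<Rightarrow> nat \<Rightarrow> real) \<Rightarrow> mat" where
  "emat f = (\<lambda>r c. if r \<in> idx4 \<and> c \<in> idx4 then es (f r c) else czero)"

lemma mmul_emat: "mmul (emat f) (emat g) = smat (\<lambda>r c. - (\<Sum>k\<in>idx4. f r k * g k c))"
  unfolding mmul_def emat_def smat_def foldr4
  by (intro ext) (simp add: idx4_eq cmul_es cadd_cs algebra_simps)

lemma mmul_smat: "mmul (smat f) (smat g) = smat (\<lambda>r c. \<Sum>k\<in>idx4. f r k * g k c)"
  unfolding mmul_def smat_def foldr4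
  by (intro ext) (simp add: idx4_eq cmul_cs cadd_cs algebra_simps)

lemma smat_single:
  assumes "i \<in> idx4" "j \<in> idx4" "\<forall>r\<in>idx4. \<forall>c\<in>idx4. f r c = (if r = i \<and> c = j then 1 else 0)"
  shows "smat f = single i j cone"
  using assms unfolding smat_def single_def by (auto simp: fun_eq_iff cs_1 cs_0)

lemma M4_entry: "A \<in> M4 S \<Longrightarrow> i \<in> idx4 \<Longrightarrow> j \<in> idx4 \<Longrightarrow> A i j \<in> S"
  unfolding M4_def mem_Collect_eq by (drule spec[of _ i], drule spec[of _ j]) simp

lemma M4_outside: "A \<in> M4 S \<Longrightarrow> \<not> (i \<in> idx4 \<and> j \<in> idx4) \<Longrightarrow> A i j = czero"
  unfolding M4_def mem_Collect_eq by (drule spec[of _ i], drule spec[of _ j]) (simp del: de_Morgan_conj)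

lemma M4_I:
  "(\<And>i j. i \<in> idx4 \<Longrightarrow> j \<in> idx4 \<Longrightarrow> A i j \<in> S) \<Longrightarrow>
   (\<And>i j. \<not> (i \<in> idx4 \<and> j \<in> idx4) \<Longrightarrow> A i j = czero) \<Longrightarrow> A \<in> M4 S"
  unfolding M4_def by simp

lemma M4_mone: "cone \<in> S \<Longrightarrow> czero \<in> S \<Longrightarrow> mone \<in> M4 S"
  by (rule M4_I) (auto simp: mone_def)

lemma M4_madd:
  assumes "\<And>x y. x \<in> S \<Longrightarrow> y \<in> S \<Longrightarrow> cadd x y \<in> S" "A \<in> M4 S" "B \<in> M4 S"
  shows "madd A B \<in> M4 S"
proof (rule M4_I)
  fix i j assume "i \<in> idx4" "j \<in> idx4"
  then show "madd A B i j \<in> S" using assms by (simp add: madd_def M4_entry)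
next
  fix i j assume "\<not> (i \<in> idx4 \<and> j \<in> idx4)"
  then show "madd A B i j = czero" using assms(2,3) by (simp add: madd_def M4_outside)
qed

lemma M4_mneg:
  assumes "\<And>x. x \<in> S \<Longrightarrow> cneg x \<in> S" "A \<in> M4 S"
  shows "mneg A \<in> M4 S"
proof (rule M4_I)
  fix i j assume "i \<in> idx4" "j \<in> idx4"
  then show "mneg A i j \<in> S" using assms by (simp add: mneg_def M4_entry)
next
  fix i j assume "\<not> (i \<in> idx4 \<and> j \<in> idx4)"
  then show "mneg A i j = czero" using assms(2) by (simp add: mneg_def M4_outside)
qed

lemma M4_mmul_entrywise:
  assumes add: "\<And>x y. x \<in> S \<Longrightarrow> y \<in> S \<Longrightarrow> cadd x y \<in> S"
    and prods: "\<And>i j k. i \<in> idx4 \<Longrightarrow> j \<in> idx4 \<Longrightarrow> k \<in> idx4 \<Longrightarrow> cmul (A i k) (B k j) \<in> S"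
  shows "mmul A B \<in> M4 S"
proof (rule M4_I)
  fix i j assume "i \<in> idx4" "j \<in> idx4"
  then show "mmul A B i j \<in> S"
    unfolding mmul_def foldr4 by (simp add: add prods idx4_eq)
qed (rule mmul_out)

lemma M4_mmul:
  assumes add: "\<And>x y. x \<in> S \<Longrightarrow> y \<in> S \<Longrightarrow> cadd x y \<in> S"
    and mul: "\<And>x y. x \<in> S \<Longrightarrow> y \<in> S \<Longrightarrow> cmul x y \<in> S"
    and "A \<in> M4 S" "B \<in> M4 S"
  shows "mmul A B \<in> M4 S"
proof (rule M4_mmul_entrywise[OF add])
  fix i j k assume "i \<in> idx4" "j \<in> idx4" "k \<in> idx4"
  then show "cmul (A i k) (B k j) \<in> S" using M4_entry assms(3,4) by (intro mul) blast+
qed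

lemma lessThan_8: "{..<8::nat} = {0, 1, 2, 3, 4, 5, 6, 7}" by auto

lemma octZ_e0_multiple: "(\<lambda>k. if k = 0 then of_int m else 0) \<in> octZ"
  unfolding octZ_def
  by (rule CollectI, rule exI[of _ "\<lambda>i. if i = 0 then m else 0"])
     (simp add: fun_eq_iff lessThan_8 octf_def)

lemma octZ_add: assumes "y \<in> octZ" "z \<in> octZ" shows "(\<lambda>k. y k + z k) \<in> octZ"
proof -
  obtain n where n: "y = (\<lambda>k. \<Sum>i<8. of_int (n i) * octf i k)" using assms(1) by (auto simp: octZ_def)
  obtain n' where n': "z = (\<lambda>k. \<Sum>i<8. of_int (n' i) * octf i k)" using assms(2) by (auto simp: octZ_def)
  show ?thesis unfolding octZ_def
    by (rule CollectI, rule exI[of _ "\<lambda>i. n i + n' i"]) (simp add: n n' sum.distrib distrib_right)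
qed

lemma octZ_double_e0_coord: assumes "y \<in> octZ" shows "2 * y 0 \<in> \<int>"
proof -
  obtain n where n: "y = (\<lambda>k. \<Sum>i<8. of_int (n i) * octf i k)" using assms by (auto simp: octZ_def)
  have "2 * y 0 = of_int (2 * n 0 - n 5 - n 6 - n 7)" by (simp add: n lessThan_8 octf_def algebra_simps)
  then show ?thesis by simp
qed

lemma iotaV_entry_octZ:
  assumes "y \<in> octZ" "r \<in> idx4" "c \<in> idx4"
  shows "\<exists>w\<in>octZ. iotaV (\<lambda>i. of_int (n i)) y r c = cvec w"
proof (cases "r = c")
  case False
  have "(\<Sum>i\<in>idx4. of_int (n i) * hcoef i r c) \<in> \<int>"
    by (intro Ints_sum Ints_mult) (auto simp: hcoef_def)
  then obtain m where m: "(\<Sum>i\<in>idx4. of_int (n i) * hcoef i r c) = of_int m" by (auto elim: Ints_cases)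
  have "iotaV (\<lambda>i. of_int (n i)) y r c = cvec (\<lambda>k. if k = 0 then of_int m else 0)"
    using assms False m by (auto simp: iotaV_def dcoef_def cscale_def ce0_def cvec_def fun_eq_iff)
  then show ?thesis using octZ_e0_multiple by blast
next
  case True
  obtain m where m: "y 0 * dcoef r r = y 0 + of_int m"
  proof (cases "odd r")
    case True
    obtain m where "- (2 * y 0) = of_int m"
      using octZ_double_e0_coord[OF assms(1)] by (metis Ints_cases Ints_minus)
    with True show ?thesis by (intro that[of m]) (simp add: dcoef_def)
  qed (intro that[of 0], simp add: dcoef_def)
  have "hcoef i r r = 0" for i by (simp add: hcoef_def)
  then have "iotaV (\<lambda>i. of_int (n i)) y r c = cvec (\<lambda>k. y k + (if k = 0 then of_int m else 0))"
    using assms True m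
    by (auto simp: iotaV_def cscale_def cadd_def ce0_def cvec_def fun_eq_iff)
  then show ?thesis using octZ_add[OF assms(1) octZ_e0_multiple] by blast
qed

section \<open>First inclusion: iota(C^+(II_{2,10})) \<subseteq> M_4(C^+(-O(Z)))\<close>

lemma Cplus_octZ_gen: "a \<in> octZ \<Longrightarrow> b \<in> octZ \<Longrightarrow> cmul (cvec a) (cvec b) \<in> Cplus_octZ"
  unfolding Cplus_octZ_def by (rule ring_gen.gen) blast

lemma Cplus_octZ_one: "cone \<in> Cplus_octZ"
  unfolding Cplus_octZ_def by (rule ring_gen.one)
lemma Cplus_octZ_add: "x \<in> Cplus_octZ \<Longrightarrow> y \<in> Cplus_octZ \<Longrightarrow> cadd x y \<in> Cplus_octZ"
  unfolding Cplus_octZ_def by (rule ring_gen.add)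
lemma Cplus_octZ_neg: "x \<in> Cplus_octZ \<Longrightarrow> cneg x \<in> Cplus_octZ"
  unfolding Cplus_octZ_def by (rule ring_gen.neg)
lemma Cplus_octZ_mul: "x \<in> Cplus_octZ \<Longrightarrow> y \<in> Cplus_octZ \<Longrightarrow> cmul x y \<in> Cplus_octZ"
  unfolding Cplus_octZ_def by (rule ring_gen.mul)
lemma Cplus_octZ_zero: "czero \<in> Cplus_octZ"
  unfolding Cplus_octZ_def by (rule ring_gen_zero) (rule cadd_cneg)

lemma II210_entry:
  assumes "v \<in> II210" "r \<in> idx4" "c \<in> idx4"
  shows "\<exists>w\<in>octZ. iotaV (fst v) (snd v) r c = cvec w"
proof -
  obtain n y where "v = (\<lambda>i. of_int (n i), y)" "y \<in> octZ"
    using assms(1) unfolding II210_def by blast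
  then show ?thesis using iotaV_entry_octZ assms(2,3) by simp
qed

lemma iota_gen_in_M4:
  assumes "a \<in> II210" "b \<in> II210"
  shows "mmul (iotaV (fst a) (snd a)) (iotaV (fst b) (snd b)) \<in> M4 Cplus_octZ"
proof (rule M4_mmul_entrywise[OF Cplus_octZ_add])
  fix i j k assume ijk: "i \<in> idx4" "j \<in> idx4" "k \<in> idx4"
  obtain w where "w \<in> octZ" "iotaV (fst a) (snd a) i k = cvec w"
    using II210_entry[OF assms(1) ijk(1,3)] by blast
  moreover obtain w' where "w' \<in> octZ" "iotaV (fst b) (snd b) k j = cvec w'"
    using II210_entry[OF assms(2) ijk(3,2)] by blast
  ultimately show "cmul (iotaV (fst a) (snd a) i k) (iotaV (fst b) (snd b) k j) \<in> Cplus_octZ"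
    by (simp add: Cplus_octZ_gen)
qed

lemma iota_Cplus_II_subset: "iota_Cplus_II \<subseteq> M4 Cplus_octZ"
  unfolding iota_Cplus_II_def
proof (rule ring_gen_subset)
  show "{mmul (iotaV (fst a) (snd a)) (iotaV (fst b) (snd b)) |a b. a \<in> II210 \<and> b \<in> II210}
      \<subseteq> M4 Cplus_octZ"
    using iota_gen_in_M4 by blast
  show "mone \<in> M4 Cplus_octZ" by (rule M4_mone[OF Cplus_octZ_one Cplus_octZ_zero])
  show "madd A B \<in> M4 Cplus_octZ" if "A \<in> M4 Cplus_octZ" "B \<in> M4 Cplus_octZ" for A B
    by (rule M4_madd[OF Cplus_octZ_add that])
  show "mneg A \<in> M4 Cplus_octZ" if "A \<in> M4 Cplus_octZ" for A
    by (rule M4_mneg[OF Cplus_octZ_neg that])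
  show "mmul A B \<in> M4 Cplus_octZ" if "A \<in> M4 Cplus_octZ" "B \<in> M4 Cplus_octZ" for A B
    by (rule M4_mmul[OF Cplus_octZ_add Cplus_octZ_mul that])
qed

section \<open>Matrix units in iota(C^+(II_{2,10}))\<close>

lemma iota_Cplus_II_gen:
  "y \<in> octZ \<Longrightarrow> y' \<in> octZ \<Longrightarrow>
   mmul (iotaV (\<lambda>i. of_int (n i)) y) (iotaV (\<lambda>i. of_int (n' i)) y') \<in> iota_Cplus_II"
  unfolding iota_Cplus_II_def II210_def by (rule ring_gen.gen) force

lemma iota_Cplus_II_add: "A \<in> iota_Cplus_II \<Longrightarrow> B \<in> iota_Cplus_II \<Longrightarrow> madd A B \<in> iota_Cplus_II"
  unfolding iota_Cplus_II_def by (rule ring_gen.add)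

lemma iota_Cplus_II_neg: "A \<in> iota_Cplus_II \<Longrightarrow> mneg A \<in> iota_Cplus_II"
  unfolding iota_Cplus_II_def by (rule ring_gen.neg)

lemma iota_Cplus_II_mul: "A \<in> iota_Cplus_II \<Longrightarrow> B \<in> iota_Cplus_II \<Longrightarrow> mmul A B \<in> iota_Cplus_II"
  unfolding iota_Cplus_II_def by (rule ring_gen.mul)

lemma iotaV_e0_multiple:
  "iotaV x (\<lambda>k. if k = 0 then t else 0) = emat (\<lambda>r c. (\<Sum>i\<in>idx4. x i * hcoef i r c) + t * dcoef r c)"
proof -
  have no_vector_part: "(\<lambda>k. if k = 0 then t else 0)(0 := 0) = (\<lambda>k. 0)" by auto
  have cvec_0: "cvec (\<lambda>k. 0) = czero" by (simp add: cvec_def czero_def fun_eq_iff)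
  show ?thesis unfolding iotaV_def emat_def es_def no_vector_part cvec_0 by (simp add: fun_eq_iff)
qed

text \<open>The basis vectors h_1, ..., h_4 (index a = 1..4) and e_0 (index a = 0) of II_{2,10};
  their images are the e_0-multiple matrices emat (basis_coef a), and bprod a b is the image
  of the even product of two of them.\<close>
definition basis_h :: "nat \<Rightarrow> nat \<Rightarrow> real" where
  "basis_h a = (\<lambda>i. if i = a then 1 else 0)"
definition basis_e :: "nat \<Rightarrow> nat \<Rightarrow> real" where
  "basis_e a = (\<lambda>k. if k = 0 \<and> a = 0 then 1 else 0)"
definition basis_coef :: "nat \<Rightarrow> nat \<Rightarrow> nat \<Rightarrow> real" where
  "basis_coef a = (if a = 0 then dcoef else hcoef a)"
definition bprod :: "nat \<Rightarrow> nat \<Rightarrow> mat" where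
  "bprod a b = mmul (iotaV (basis_h a) (basis_e a)) (iotaV (basis_h b) (basis_e b))"

lemma iota_basis_emat: "iotaV (basis_h a) (basis_e a) = emat (basis_coef a)"
proof -
  have sum_h: "(\<Sum>i\<in>idx4. basis_h a i * hcoef i r c) = hcoef a r c" for r c
    by (auto simp: basis_h_def idx4_eq hcoef_def)
  have e: "basis_e a = (\<lambda>k. if k = 0 then (if a = 0 then 1 else 0) else 0)"
    by (auto simp: basis_e_def)
  have "hcoef 0 = (\<lambda>r c. 0)" by (simp add: hcoef_def fun_eq_iff)
  then show ?thesis
    unfolding e iotaV_e0_multiple sum_h by (cases "a = 0") (simp_all add: basis_coef_def)
qed

lemma bprod_smat: "bprod a b = smat (\<lambda>r c. - (\<Sum>k\<in>idx4. basis_coef a r k * basis_coef b k c))"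
  by (simp add: bprod_def iota_basis_emat mmul_emat)

lemma bprod_in: "bprod a b \<in> iota_Cplus_II"
proof -
  have h: "basis_h a = (\<lambda>i. of_int (if i = a then 1 else 0))" for a
    by (simp add: basis_h_def fun_eq_iff)
  have "basis_e a = (\<lambda>k. if k = 0 then of_int (if a = 0 then 1 else 0) else 0)" for a
    by (simp add: basis_e_def fun_eq_iff)
  then have "basis_e a \<in> octZ" "basis_e b \<in> octZ" by (simp_all add: octZ_e0_multiple)
  then show ?thesis unfolding bprod_def h by (rule iota_Cplus_II_gen)
qed

lemma E11_eq: "mmul (bprod 1 2) (bprod 3 4) = single 1 1 cone"
  unfolding bprod_smat mmul_smat
  by (rule smat_single) (simp_all add: idx4_eq basis_coef_def hcoef_def)

lemma unit_first_row: assumes "j \<in> idx4" shows "single 1 j cone \<in> iota_Cplus_II"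
proof -
  have E11: "single 1 1 cone \<in> iota_Cplus_II" using E11_eq iota_Cplus_II_mul bprod_in by metis
  have "mmul (single 1 1 cone) (bprod 0 1) = single 1 2 cone"
    "mmul (single 1 1 cone) (bprod 0 3) = single 1 4 cone"
    "bprod 1 3 = single 1 3 cone"
    unfolding E11_eq[symmetric] bprod_smat mmul_smat
    by (rule smat_single; simp add: idx4_eq basis_coef_def hcoef_def dcoef_def)+
  then show ?thesis using assms E11 iota_Cplus_II_mul bprod_in by (auto simp: idx4_eq) metis+
qed

lemma unit_first_column: assumes "i \<in> idx4" shows "single i 1 cone \<in> iota_Cplus_II"
proof -
  have E11: "single 1 1 cone \<in> iota_Cplus_II" using E11_eq iota_Cplus_II_mul bprod_in by metis
  have "mmul (bprod 0 2) (single 1 1 cone) = single 2 1 cone"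
    "mmul (bprod 0 4) (single 1 1 cone) = single 4 1 cone"
    "bprod 4 2 = single 3 1 cone"
    unfolding E11_eq[symmetric] bprod_smat mmul_smat
    by (rule smat_single; simp add: idx4_eq basis_coef_def hcoef_def dcoef_def)+
  then show ?thesis using assms E11 iota_Cplus_II_mul bprod_in by (auto simp: idx4_eq) metis+
qed

lemma unit_in: assumes "i \<in> idx4" "j \<in> idx4" shows "single i j cone \<in> iota_Cplus_II"
proof -
  have "mmul (single i 1 cone) (single 1 j cone) = single i j cone"
    using assms by (simp add: single_mul idx4_eq cmul_cone_cone)
  then show ?thesis
    using iota_Cplus_II_mul unit_first_column[OF assms(1)] unit_first_row[OF assms(2)] by metis
qed

section \<open>Second inclusion: M_4(C^+(-O(Z))) \<subseteq> iota(C^+(II_{2,10}))\<close>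

text \<open>For vectors a, b of V_0, row 2 and column 2 of iota(a) have the single entry a at (2,2)
  (iota(e_0) carries no sign there), so the (2,2) entry of iota(a) iota(b) is the product ab.\<close>
lemma iota_vec_prod_22:
  "mmul (iotaV (\<lambda>i. 0) a) (iotaV (\<lambda>i. 0) b) 2 2 = cmul (cvec a) (cvec b)"
proof -
  have entry: "iotaV (\<lambda>i. 0) v 2 k = (if k = 2 then cvec v else czero)"
    "iotaV (\<lambda>i. 0) v k 2 = (if k = 2 then cvec v else czero)" if "k \<in> idx4" for v k
    using that by (auto simp: iotaV_def idx4_eq dcoef_def cscale_def cadd_def ce0_def cvec_def fun_eq_iff)
  show ?thesis unfolding mmul_def foldr4 by (simp add: idx4_eq entry)
qed

lemma single_gen_in:
  assumes "a \<in> octZ" "b \<in> octZ" "i \<in> idx4" "j \<in> idx4"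
  shows "single i j (cmul (cvec a) (cvec b)) \<in> iota_Cplus_II"
proof -
  let ?N = "mmul (iotaV (\<lambda>i. 0) a) (iotaV (\<lambda>i. 0) b)"
  have two: "(2::nat) \<in> idx4" by (simp add: idx4_eq)
  have "?N \<in> iota_Cplus_II" using iota_Cplus_II_gen[OF assms(1,2), of "\<lambda>_. 0" "\<lambda>_. 0"] by simp
  then have "mmul (mmul (single i 2 cone) ?N) (single 2 j cone) \<in> iota_Cplus_II"
    using iota_Cplus_II_mul unit_in assms two by metis
  moreover have "mmul (mmul (single i 2 cone) ?N) (single 2 j cone) = single i j (cmul (cvec a) (cvec b))"
    using assms two
    by (simp add: mmul_single_left mmul_single_right)
       (auto simp: single_def fun_eq_iff iota_vec_prod_22 cmul_cone_left cmul_cone_right cl_supported_cmul)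
  ultimately show ?thesis by simp
qed

lemma single_in:
  assumes "c \<in> Cplus_octZ" "i \<in> idx4" "j \<in> idx4"
  shows "single i j c \<in> iota_Cplus_II"
proof -
  define U where "U = {c. \<forall>i\<in>idx4. \<forall>j\<in>idx4. single i j c \<in> iota_Cplus_II}"
  have "ring_gen cmul cadd cneg cone {cmul (cvec a) (cvec b) |a b. a \<in> octZ \<and> b \<in> octZ} \<subseteq> U"
  proof (rule ring_gen_subset)
    show "{cmul (cvec a) (cvec b) |a b. a \<in> octZ \<and> b \<in> octZ} \<subseteq> U"
      by (auto simp: U_def intro: single_gen_in)
    show "cone \<in> U" by (simp add: U_def unit_in)
    show "cadd x y \<in> U" if "x \<in> U" "y \<in> U" for x y
    proof -
      have "single i j (cadd x y) = madd (single i j x) (single i j y)" for i j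
        by (auto simp: single_def madd_def fun_eq_iff)
      then show ?thesis using that by (simp add: U_def iota_Cplus_II_add)
    qed
    show "cneg x \<in> U" if "x \<in> U" for x
    proof -
      have "single i j (cneg x) = mneg (single i j x)" for i j
        by (auto simp: single_def mneg_def fun_eq_iff)
      then show ?thesis using that by (simp add: U_def iota_Cplus_II_neg)
    qed
    show "cmul x y \<in> U" if "x \<in> U" "y \<in> U" for x y
    proof -
      have one: "(1::nat) \<in> idx4" by (simp add: idx4_eq)
      have "single i j (cmul x y) = mmul (single i 1 x) (single 1 j y)" if "i \<in> idx4" "j \<in> idx4" for i j
        using that one by (simp add: single_mul)
      then show ?thesis using that one by (auto simp: U_def intro!: iota_Cplus_II_mul)
    qed
  qed
  then show ?thesis using assms unfolding U_def Cplus_octZ_def by blast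
qed

definition restr :: "(nat \<times> nat) set \<Rightarrow> mat \<Rightarrow> mat" where
  "restr F A = (\<lambda>r s. if (r, s) \<in> F then A r s else czero)"

lemma restr_in:
  assumes "finite F" "F \<subseteq> idx4 \<times> idx4" "\<forall>(i, j)\<in>F. A i j \<in> Cplus_octZ"
  shows "restr F A \<in> iota_Cplus_II"
  using assms
proof (induction F rule: finite_induct)
  case empty
  have "restr {} A = madd mone (mneg mone)"
    by (simp add: restr_def madd_def mneg_def cadd_cneg)
  then show ?case unfolding iota_Cplus_II_def by (simp add: ring_gen.intros)
next
  case (insert p F)
  obtain i j where p: "p = (i, j)" by (cases p)
  have "restr (insert p F) A = madd (single i j (A i j)) (restr F A)"
    using insert(2) p by (auto simp: restr_def single_def madd_def fun_eq_iff)
  moreover have "single i j (A i j) \<in> iota_Cplus_II" using single_in insert(4,5) p by auto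
  moreover have "restr F A \<in> iota_Cplus_II" using insert by auto
  ultimately show ?case by (simp add: iota_Cplus_II_add)
qed

lemma M4_Cplus_octZ_subset: "M4 Cplus_octZ \<subseteq> iota_Cplus_II"
proof
  fix A assume A: "A \<in> M4 Cplus_octZ"
  have "A = restr (idx4 \<times> idx4) A" using A by (auto simp: restr_def fun_eq_iff M4_outside)
  also have "\<dots> \<in> iota_Cplus_II"
    using A by (intro restr_in) (auto simp: M4_entry idx4_def)
  finally show "A \<in> iota_Cplus_II" .
qed

theorem lemma5p1:
  shows "iota_Cplus_II = M4 Cplus_octZ"
  using iota_Cplus_II_subset M4_Cplus_octZ_subset by (rule antisym)

end
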